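(* Let $G=(V,E)$ be a graph of bounded degree and consider the rescaled SEIS process $\eta_t$ on $G$ with parameters $\lambda>0,\tau>0$, constructed from its graphical representation. Let $R\subset\mathcal{S}$ be the closure of an open set. If $R$ is onset-ordered and $\eta$ is good for $R$, then almost surely: (1) for each $t\ge0$, $\eta_t(x)=2$ for at most one $x$ in the set $\{x\in V:(x,t)\in R\}$; and (2) every potentially active path $\gamma$ contained in $R$ whose base $(y,s)$ satisfies $\eta_s(y)=1$ is active.
   Context: The SEIS process: sites in states $0$ (susceptible), $1$ (exposed), $2$ (infectious). Rescaled graphical representation: on $\mathcal{S}=V\times[0,\infty)$ (topology generated by sets $\{a\}\times(t,t')$, $a\in V\cup E$), independent Poisson processes of recovery labels $\times$ (intensity $\tau$) and onset labels $\star$ (intensity $1$) at each site, and transmission labels $\leftrightarrow$ (intensity $\lambda\tau$) along each edge. The process evolves by: at a $\times$ at $x$, if $x$ is in state $2$ it becomes $0$; at a $\star$ at $x$, if $x$ is in state $1$ it becomes $2$; at a $\leftrightarrow$ on $xy$, if one endpoint is in state $2$ and the other in state $0$, the latter becomes $1$; otherwise nothing happens. A path is a list $(v_1,h_1,\dots,v_{m-1},h_{m-1},v_m)$ with $v_i=\{x_i\}\times(t_{i-1},t_i)$, $t_{i-1}<t_i$, and $h_i=\{x_ix_{i+1}\}\times\{t_i\}$ with $x_ix_{i+1}\in E$; its base is $(x_1,t_0)$ and its end is $(x_m,t_m)$. A path is active if for $i=1,\dots,m-1$, $\eta_{t_i}(x_i)=2$, $\eta_{t_i}(x_{i+1})=1$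 and there is a $\leftrightarrow$ label at $h_i$, and for $i=1,\dots,m$, $\eta_t(x_i)\ne0$ for $t\in(t_{i-1},t_i)$. A path is potentially active if (a) for $i=1,\dots,m-1$ there is a $\leftrightarrow$ label at $h_i$; (b) for $i=1,\dots,m-1$ there is a $\star$ label at some $(x_i,t)\in v_i$ such that there are no $\star$ labels in $\{x_i\}\times(t_{i-1},t)$ and no $\times$ labels in $\{x_i\}\times(t,t_i)$; (c) for any $\star$ label at $(x_m,t)\in v_m$ there are no $\times$ labels in $\{x_m\}\times(t,t_m)$. The base of $R$ is $\mathrm{base}(R)=\{(x,t)\in R:(x,t-\epsilon)\notin R\text{ for all small enough }\epsilon>0\}$. $R$ is onset-ordered if whenever there is a $\star$ label at $(x,t)\in R$ and $\{x\}\times(t,t')\subset R$ with $t<t'$, then for any $\star$ label at a point $(y,s)\in R$ with $s\in(t,t')$ there is a $\times$ label at $(x,s')$ for some $s'\in(t,s)$. $\eta$ is good for $R$ if $\eta_t(x)\ne2$ for all $(x,t)\in\mathrm{base}(R)$. *)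

theory Defs
  imports "HOL-Probability.Probability"
begin

definition graph :: "'v set \<Rightarrow> 'v set set \<Rightarrow> bool" where
  "graph V E \<longleftrightarrow> (\<forall>e\<in>E. \<exists>x y. x \<noteq> y \<and> x \<in> V \<and> y \<in> V \<and> e = {x, y})"

definition bounded_degree :: "'v set \<Rightarrow> 'v set set \<Rightarrow> bool" where
  "bounded_degree V E \<longleftrightarrow>
     (\<exists>D::nat. \<forall>x\<in>V. finite {y. {x, y} \<in> E} \<and> card {y. {x, y} \<in> E} \<le> D)"

datatype 'v loc = Vtx 'v | Edg "'v set"

definition locs :: "'v set \<Rightarrow> 'v set set \<Rightarrow> 'v loc set" where
  "locs V E = Vtx ` V \<union> Edg ` E"

definition spacetime_top :: "'v set \<Rightarrow> 'v set set \<Rightarrow> ('v loc \<times> real) topology" where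
  "spacetime_top V E =
     topology_generated_by {{a} \<times> ({t<..<t'} \<inter> {0..}) | a t t'. a \<in> locs V E \<and> t < t'}"

definition closure_of_open :: "'v set \<Rightarrow> 'v set set \<Rightarrow> ('v loc \<times> real) set \<Rightarrow> bool" where
  "closure_of_open V E R \<longleftrightarrow>
     (\<exists>U. openin (spacetime_top V E) U \<and> R = spacetime_top V E closure_of U)"

definition base_of :: "('v loc \<times> real) set \<Rightarrow> ('v loc \<times> real) set" where
  "base_of R = {(a, t) \<in> R. \<exists>\<delta>>0. \<forall>\<epsilon>. 0 < \<epsilon> \<and> \<epsilon> < \<delta> \<longrightarrow> (a, t - \<epsilon>) \<notin> R}"

text \<open>Label times of a Poisson process given by its interarrival times.\<close>
definition arrivals :: "(nat \<Rightarrow> real) \<Rightarrow> real set" where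
  "arrivals T = range (\<lambda>n. \<Sum>k\<le>n. T k)"

datatype 'v clock = RecC 'v nat | OnsC 'v nat | TraC "'v set" nat

definition clock_index :: "'v set \<Rightarrow> 'v set set \<Rightarrow> 'v clock set" where
  "clock_index V E = {RecC x n | x n. x \<in> V} \<union> {OnsC x n | x n. x \<in> V} \<union> {TraC e n | e n. e \<in> E}"

definition rec_lab :: "('v clock \<Rightarrow> 'w \<Rightarrow> real) \<Rightarrow> 'w \<Rightarrow> 'v \<Rightarrow> real set" where
  "rec_lab X \<omega> x = arrivals (\<lambda>k. X (RecC x k) \<omega>)"
definition ons_lab :: "('v clock \<Rightarrow> 'w \<Rightarrow> real) \<Rightarrow> 'w \<Rightarrow> 'v \<Rightarrow> real set" where
  "ons_lab X \<omega> x = arrivals (\<lambda>k. X (OnsC x k) \<omega>)"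
definition tra_lab :: "('v clock \<Rightarrow> 'w \<Rightarrow> real) \<Rightarrow> 'w \<Rightarrow> 'v set \<Rightarrow> real set" where
  "tra_lab X \<omega> e = arrivals (\<lambda>k. X (TraC e k) \<omega>)"

definition graphical_rep ::
  "'w measure \<Rightarrow> 'v set \<Rightarrow> 'v set set \<Rightarrow> real \<Rightarrow> real \<Rightarrow> ('v clock \<Rightarrow> 'w \<Rightarrow> real) \<Rightarrow> bool" where
  "graphical_rep M V E lam tau X \<longleftrightarrow>
     prob_space.indep_vars M (\<lambda>_. borel) X (clock_index V E) \<and>
     (\<forall>x\<in>V. \<forall>n. distributed M lborel (X (RecC x n)) (exponential_density tau)) \<and>
     (\<forall>x\<in>V. \<forall>n. distributed M lborel (X (OnsC x n)) (exponential_density 1)) \<and>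
     (\<forall>e\<in>E. \<forall>n. distributed M lborel (X (TraC e n)) (exponential_density (lam * tau)))"

text \<open>New state of x at a time t, given the states just before t (pre), and whether
  t is a recovery / onset label at x and the set of transmission-label times at edges.\<close>
definition seis_update ::
  "'v set set \<Rightarrow> ('v \<Rightarrow> real set) \<Rightarrow> ('v \<Rightarrow> real set) \<Rightarrow> ('v set \<Rightarrow> real set)
    \<Rightarrow> ('v \<Rightarrow> nat) \<Rightarrow> 'v \<Rightarrow> real \<Rightarrow> nat" where
  "seis_update E rc on tr pre x t =
     (if t \<in> rc x \<and> pre x = 2 then 0
      else if t \<in> on x \<and> pre x = 1 then 2
      else if pre x = 0 \<and> (\<exists>y. {x, y} \<in> E \<and> t \<in> tr {x, y} \<and> pre y = 2) then 1
      else pre x)"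

definition seis_traj ::
  "'v set \<Rightarrow> 'v set set \<Rightarrow> ('v \<Rightarrow> real set) \<Rightarrow> ('v \<Rightarrow> real set) \<Rightarrow> ('v set \<Rightarrow> real set)
    \<Rightarrow> ('v \<Rightarrow> real \<Rightarrow> nat) \<Rightarrow> bool" where
  "seis_traj V E rc on tr eta \<longleftrightarrow>
     (\<forall>x\<in>V. \<forall>t\<ge>0. eta x t \<in> {0, 1, 2} \<and> (\<exists>\<epsilon>>0. \<forall>s\<in>{t..<t+\<epsilon>}. eta x s = eta x t)) \<and>
     (\<forall>x\<in>V. \<forall>t>0. \<exists>\<epsilon>>0. \<epsilon> \<le> t \<and>
        (\<forall>y\<in>V. (y = x \<or> {x, y} \<in> E) \<longrightarrow> (\<forall>s\<in>{t-\<epsilon><..<t}. eta y s = eta y (t - \<epsilon>/2))) \<and>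
        eta x t = seis_update E rc on tr (\<lambda>y. eta y (t - \<epsilon>/2)) x t)"

definition onset_ordered ::
  "('v \<Rightarrow> real set) \<Rightarrow> ('v \<Rightarrow> real set) \<Rightarrow> ('v loc \<times> real) set \<Rightarrow> bool" where
  "onset_ordered rc on R \<longleftrightarrow>
     (\<forall>x t t'. t \<in> on x \<and> (Vtx x, t) \<in> R \<and> t < t' \<and> {Vtx x} \<times> {t<..<t'} \<subseteq> R \<longrightarrow>
        (\<forall>y s. s \<in> on y \<and> (Vtx y, s) \<in> R \<and> t < s \<and> s < t' \<longrightarrow>
           (\<exists>s'. t < s' \<and> s' < s \<and> s' \<in> rc x)))"

definition good_for :: "('v \<Rightarrow> real \<Rightarrow> nat) \<Rightarrow> ('v loc \<times> real) set \<Rightarrow> bool" where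
  "good_for eta R \<longleftrightarrow> (\<forall>x t. (Vtx x, t) \<in> base_of R \<longrightarrow> eta x t \<noteq> 2)"

text \<open>A path (v_1,h_1,...,v_m) with v_i = {x_i} x (t_(i-1),t_i), h_i = {x_i x_(i+1)} x {t_i}
  is encoded (0-based) by the vertex list xs = [x_1..x_m] and the time list ts = [t_0..t_m].\<close>
definition is_path :: "'v set set \<Rightarrow> 'v list \<Rightarrow> real list \<Rightarrow> bool" where
  "is_path E xs ts \<longleftrightarrow> xs \<noteq> [] \<and> length ts = length xs + 1 \<and> 0 \<le> ts ! 0 \<and>
     (\<forall>i < length xs. ts ! i < ts ! (i+1)) \<and>
     (\<forall>i. i + 1 < length xs \<longrightarrow> {xs ! i, xs ! (i+1)} \<in> E)"

definition path_set :: "'v list \<Rightarrow> real list \<Rightarrow> ('v loc \<times> real) set" where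
  "path_set xs ts =
     (\<Union>i<length xs. {Vtx (xs ! i)} \<times> {ts ! i <..< ts ! (i+1)}) \<union>
     (\<Union>i\<in>{i. i + 1 < length xs}. {Edg {xs ! i, xs ! (i+1)}} \<times> {ts ! (i+1)})"

definition active_path ::
  "('v set \<Rightarrow> real set) \<Rightarrow> ('v \<Rightarrow> real \<Rightarrow> nat) \<Rightarrow> 'v list \<Rightarrow> real list \<Rightarrow> bool" where
  "active_path tr eta xs ts \<longleftrightarrow>
     (\<forall>i. i + 1 < length xs \<longrightarrow>
        eta (xs ! i) (ts ! (i+1)) = 2 \<and> eta (xs ! (i+1)) (ts ! (i+1)) = 1 \<and>
        ts ! (i+1) \<in> tr {xs ! i, xs ! (i+1)}) \<and>
     (\<forall>i < length xs. \<forall>t. ts ! i < t \<and> t < ts ! (i+1) \<longrightarrow> eta (xs ! i) t \<noteq> 0)"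

definition potentially_active ::
  "('v \<Rightarrow> real set) \<Rightarrow> ('v \<Rightarrow> real set) \<Rightarrow> ('v set \<Rightarrow> real set) \<Rightarrow> 'v list \<Rightarrow> real list \<Rightarrow> bool" where
  "potentially_active rc on tr xs ts \<longleftrightarrow>
     (\<forall>i. i + 1 < length xs \<longrightarrow> ts ! (i+1) \<in> tr {xs ! i, xs ! (i+1)}) \<and>
     (\<forall>i. i + 1 < length xs \<longrightarrow>
        (\<exists>t. ts ! i < t \<and> t < ts ! (i+1) \<and> t \<in> on (xs ! i) \<and>
           (\<forall>s. ts ! i < s \<and> s < t \<longrightarrow> s \<notin> on (xs ! i)) \<and>
           (\<forall>s. t < s \<and> s < ts ! (i+1) \<longrightarrow> s \<notin> rc (xs ! i)))) \<and>
     (let m = length xs in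
        \<forall>t. ts ! (m-1) < t \<and> t < ts ! m \<and> t \<in> on (xs ! (m-1)) \<longrightarrow>
          (\<forall>s. t < s \<and> s < ts ! m \<longrightarrow> s \<notin> rc (xs ! (m-1))))"

end

theory Submission
  imports Defs
begin

text \<open>
  Fix a sample point whose labels are generic: within R no two onsets coincide, no onset falls
  on a time at which a line of R ends, and no transmission label coincides with a recovery or
  onset label at an endpoint. If x is infectious at a time t with (x, t) in R, goodness forces
  the infection to have started at an onset tx of x inside R, and x stayed in R and infectious
  since then. For two such vertices x, y with onsets tx < ty, onset-ordering produces a recovery
  of x between tx and ty, contradicting the infection of x. Along a potentially active path the
  exposed vertex becomes infectious at its first onset, cannot recover before the transmission
  label, and infects its successor, which by the first claim is not infectious itself.

  Genericity holds almost surely when R meets only countably many vertex lines, since then only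
  countably many independent continuously distributed label times are involved. If R meets
  uncountably many lines, infinitely many of them contain a common time interval (p, q), and
  almost surely one of these vertices has two onsets in (p, q) before any recovery, so R is
  almost surely not onset-ordered.
\<close>

section \<open>Space-time regions\<close>

lemma openin_spacetime_top_time_nbhd:
  assumes "openin (spacetime_top V E) U" "(a, r) \<in> U"
  shows "\<exists>\<delta>>0. \<forall>r'. \<bar>r' - r\<bar> < \<delta> \<and> 0 \<le> r' \<longrightarrow> (a, r') \<in> U"
proof -
  have "generate_topology_on {{a} \<times> ({t<..<t'} \<inter> {0..}) | a t t'. a \<in> locs V E \<and> t < t'} U"
    using assms(1) unfolding spacetime_top_def by (rule openin_topology_generated_by)
  then have "\<forall>(a, r)\<in>U. \<exists>\<delta>>0. \<forall>r'. \<bar>r' - r\<bar> < \<delta> \<and> 0 \<le> r' \<longrightarrow> (a, r') \<in> U"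
  proof (induction rule: generate_topology_on.induct)
    case (Int A B)
    show ?case
    proof clarify
      fix a r assume "(a, r) \<in> A" "(a, r) \<in> B"
      then obtain d1 d2 where "d1 > 0" "\<forall>r'. \<bar>r' - r\<bar> < d1 \<and> 0 \<le> r' \<longrightarrow> (a, r') \<in> A"
        "d2 > 0" "\<forall>r'. \<bar>r' - r\<bar> < d2 \<and> 0 \<le> r' \<longrightarrow> (a, r') \<in> B"
        using Int.IH by blast
      then show "\<exists>\<delta>>0. \<forall>r'. \<bar>r' - r\<bar> < \<delta> \<and> 0 \<le> r' \<longrightarrow> (a, r') \<in> A \<inter> B"
        by (intro exI[of _ "min d1 d2"]) auto
    qed
  next
    case (UN K)
    then show ?case by fast
  next
    case (Basis s)
    then obtain b t t' where s: "s = {b} \<times> ({t<..<t'} \<inter> {0..})" by blast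
    show ?case
      unfolding s by (fastforce intro!: exI[where x = "min (r - t) (t' - r)" for r])
  qed simp
  then show ?thesis using assms(2) by blast
qed

lemma topspace_spacetime_top: "topspace (spacetime_top V E) = locs V E \<times> {0..}"
proof -
  have "p \<in> \<Union>{{a} \<times> ({t<..<t'} \<inter> {0..}) | a t t'. a \<in> locs V E \<and> t < t'}"
    if "p \<in> locs V E \<times> {0..}" for p :: "'a loc \<times> real"
    using that by (intro UnionI[of "{fst p} \<times> ({snd p - 1<..<snd p + 1} \<inter> {0..})"]) force+
  then show ?thesis unfolding spacetime_top_def by auto
qed

lemma closure_of_open_subset:
  assumes "closure_of_open V E R"
  shows "R \<subseteq> locs V E \<times> {0..}"
  using assms closure_of_subset_topspace topspace_spacetime_top
  unfolding closure_of_open_def by metis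

lemma closure_of_open_complement_nbhd:
  assumes R: "closure_of_open V E R" and "0 \<le> t" "(a, t) \<notin> R"
  shows "\<exists>\<delta>>0. \<forall>r. \<bar>r - t\<bar> < \<delta> \<longrightarrow> (a, r) \<notin> R"
proof (cases "a \<in> locs V E")
  case False
  then show ?thesis using closure_of_open_subset[OF R] by (intro exI[of _ 1]) auto
next
  case True
  have "closedin (spacetime_top V E) R" using R unfolding closure_of_open_def by auto
  then have "openin (spacetime_top V E) (topspace (spacetime_top V E) - R)"
    by (simp add: closedin_def)
  moreover have "(a, t) \<in> topspace (spacetime_top V E) - R"
    using True assms topspace_spacetime_top by auto
  ultimately obtain d where "d > 0"
    "\<forall>r. \<bar>r - t\<bar> < d \<and> 0 \<le> r \<longrightarrow> (a, r) \<in> topspace (spacetime_top V E) - R"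
    using openin_spacetime_top_time_nbhd by blast
  then show ?thesis using closure_of_open_subset[OF R] by (intro exI[of _ d]) force
qed

lemma closure_of_open_rational_interval:
  assumes R: "closure_of_open V E R" and "(a, t) \<in> R"
  obtains p q where "p \<in> \<rat>" "q \<in> \<rat>" "0 \<le> p" "p < q" "{a} \<times> {p<..<q} \<subseteq> R"
proof -
  obtain U where U: "openin (spacetime_top V E) U" and RU: "R = spacetime_top V E closure_of U"
    using R unfolding closure_of_open_def by blast
  have at: "a \<in> locs V E" "0 \<le> t" using closure_of_open_subset[OF R] assms(2) by auto
  define N where "N = {a} \<times> ({t - 1<..<t + 1} \<inter> {0..})"
  have "openin (spacetime_top V E) N"
    unfolding spacetime_top_def N_def
    by (rule topology_generated_by_Basis) (use at in \<open>intro CollectI exI conjI refl, auto\<close>)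
  moreover have "(a, t) \<in> N" using at unfolding N_def by auto
  ultimately have "\<exists>y\<in>U. y \<in> N" using assms(2) RU by (metis in_closure_of)
  then obtain r0 where r0: "(a, r0) \<in> U" unfolding N_def by auto
  then obtain d where d: "d > 0" "\<forall>r. \<bar>r - r0\<bar> < d \<and> 0 \<le> r \<longrightarrow> (a, r) \<in> U"
    using openin_spacetime_top_time_nbhd[OF U] by blast
  have r0_nonneg: "0 \<le> r0"
    using r0 openin_subset[OF U] topspace_spacetime_top by fastforce
  have UR: "U \<subseteq> R" unfolding RU using openin_subset[OF U] by (rule closure_of_subset)
  obtain p where p: "p \<in> \<rat>" "r0 < p" "p < r0 + d/2"
    using Rats_dense_in_real[of r0 "r0 + d/2"] d(1) by auto
  obtain q where q: "q \<in> \<rat>" "p < q" "q < r0 + d/2"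
    using Rats_dense_in_real[of p "r0 + d/2"] p by auto
  have "{a} \<times> {p<..<q} \<subseteq> R" using p q d r0_nonneg UR by auto
  then show ?thesis using that p q r0_nonneg by simp
qed

lemma closure_of_open_interval_endpoints:
  assumes R: "closure_of_open V E R" and "l < r" "0 \<le> l" "{a} \<times> {l<..<r} \<subseteq> R"
  shows "(a, l) \<in> R" "(a, r) \<in> R"
proof -
  have near: False
    if "(a, t) \<notin> R" "0 \<le> t" "\<And>\<delta>. \<delta> > 0 \<Longrightarrow> \<exists>w. l < w \<and> w < r \<and> \<bar>w - t\<bar> < \<delta>" for t
    using closure_of_open_complement_nbhd[OF R that(2,1)] that(3) assms(4) by fastforce
  show "(a, l) \<in> R"
  proof (rule ccontr)
    assume "(a, l) \<notin> R"
    moreover have "\<exists>w. l < w \<and> w < r \<and> \<bar>w - l\<bar> < \<delta>" if "\<delta> > 0" for \<delta>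
      using that assms(2) by (intro exI[of _ "l + min (r - l) \<delta> / 2"]) (auto simp: min_def field_simps)
    ultimately show False using near assms(3) by blast
  qed
  show "(a, r) \<in> R"
  proof (rule ccontr)
    assume "(a, r) \<notin> R"
    moreover have "\<exists>w. l < w \<and> w < r \<and> \<bar>w - r\<bar> < \<delta>" if "\<delta> > 0" for \<delta>
      using that assms(2) by (intro exI[of _ "r - min (r - l) \<delta> / 2"]) (auto simp: min_def field_simps)
    moreover have "0 \<le> r" using assms(2,3) by simp
    ultimately show False using near by blast
  qed
qed

lemma closure_of_open_base_zero:
  assumes "closure_of_open V E R" "(a, 0) \<in> R"
  shows "(a, 0) \<in> base_of R"
  using closure_of_open_subset[OF assms(1)] assms(2) unfolding base_of_def
  by (auto intro!: exI[of _ 1])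

lemma closure_of_open_base_between:
  assumes R: "closure_of_open V E R" and "0 \<le> u" "u \<le> s" "(a, s) \<in> R" "(a, u) \<notin> R"
  obtains v where "u < v" "v \<le> s" "(a, v) \<in> base_of R"
proof -
  define Q where "Q = {r. u \<le> r \<and> r \<le> s \<and> (a, r) \<in> R}"
  have sQ: "s \<in> Q" using assms unfolding Q_def by auto
  have bdd: "bdd_below Q" unfolding Q_def by (rule bdd_belowI[of _ u]) auto
  define v where "v = Inf Q"
  have uv: "u \<le> v" unfolding v_def using sQ by (intro cInf_greatest) (auto simp: Q_def)
  have vs: "v \<le> s" unfolding v_def using sQ bdd by (rule cInf_lower)
  have vR: "(a, v) \<in> R"
  proof (rule ccontr)
    assume "(a, v) \<notin> R"
    then obtain d where d: "d > 0" "\<forall>r. \<bar>r - v\<bar> < d \<longrightarrow> (a, r) \<notin> R"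
      using closure_of_open_complement_nbhd[OF R] uv assms(2) by (meson order_trans)
    obtain r where "r \<in> Q" "r < v + d"
      using cInf_less_iff[of Q "v + d"] sQ bdd d(1) unfolding v_def by auto
    moreover have "v \<le> r" unfolding v_def using \<open>r \<in> Q\<close> bdd by (rule cInf_lower)
    ultimately show False using d(2) unfolding Q_def by auto
  qed
  have "u < v" using uv vR assms(5) by (cases "u = v") auto
  moreover have "(a, v - \<epsilon>) \<notin> R" if "0 < \<epsilon>" "\<epsilon> < v - u" for \<epsilon>
  proof
    assume "(a, v - \<epsilon>) \<in> R"
    then have "v - \<epsilon> \<in> Q" using that vs unfolding Q_def by auto
    then show False using cInf_lower[OF _ bdd] that(1) unfolding v_def by fastforce
  qed
  ultimately have "(a, v) \<in> base_of R" using vR unfolding base_of_def by (auto intro!: exI[of _ "v - u"])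
  then show ?thesis using that \<open>u < v\<close> vs by blast
qed

section \<open>Trajectories of the SEIS dynamics\<close>

lemma seis_update_eq_2:
  assumes "seis_update E rc on tr pre x t = 2" "pre x \<noteq> 2"
  shows "t \<in> on x" "pre x = 1"
  using assms unfolding seis_update_def by (auto split: if_splits)

locale seis_trajectory =
  fixes V :: "'v set" and E :: "'v set set" and rc on :: "'v \<Rightarrow> real set"
    and tr :: "'v set \<Rightarrow> real set" and \<eta> :: "'v \<Rightarrow> real \<Rightarrow> nat"
  assumes traj: "seis_traj V E rc on tr \<eta>"
begin

lemma state_range:
  assumes "x \<in> V" "0 \<le> t"
  shows "\<eta> x t \<in> {0, 1, 2}"
  using traj assms unfolding seis_traj_def by blast

lemma right_constant:
  assumes "x \<in> V" "0 \<le> t"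
  obtains \<epsilon> where "\<epsilon> > 0" "\<And>s. t \<le> s \<Longrightarrow> s < t + \<epsilon> \<Longrightarrow> \<eta> x s = \<eta> x t"
  using traj assms unfolding seis_traj_def by (metis atLeastLessThan_iff)

lemma left_update:
  assumes "x \<in> V" "0 < t"
  obtains \<epsilon> where "\<epsilon> > 0" "\<epsilon> \<le> t"
    "\<And>y s. y \<in> V \<Longrightarrow> y = x \<or> {x, y} \<in> E \<Longrightarrow> t - \<epsilon> < s \<Longrightarrow> s < t \<Longrightarrow> \<eta> y s = \<eta> y (t - \<epsilon>/2)"
    "\<eta> x t = seis_update E rc on tr (\<lambda>y. \<eta> y (t - \<epsilon>/2)) x t"
  using traj assms unfolding seis_traj_def by (metis greaterThanLessThan_iff)

lemma update_from_left:
  assumes x: "x \<in> V" and "a < u" "0 \<le> a"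
    and step: "\<exists>\<delta>>0. \<forall>v pre. a \<le> v \<and> v < u \<and> u - \<delta> < v \<and> P v (pre x)
                 \<longrightarrow> P u (seis_update E rc on tr pre x u)"
    and before: "\<And>v. a \<le> v \<Longrightarrow> v < u \<Longrightarrow> P v (\<eta> x v)"
  shows "P u (\<eta> x u)"
proof -
  obtain \<epsilon> where \<epsilon>: "\<epsilon> > 0" "\<epsilon> \<le> u"
    "\<And>s. u - \<epsilon> < s \<Longrightarrow> s < u \<Longrightarrow> \<eta> x s = \<eta> x (u - \<epsilon>/2)"
    "\<eta> x u = seis_update E rc on tr (\<lambda>y. \<eta> y (u - \<epsilon>/2)) x u"
    using left_update[OF x, of u] x assms(2,3) by (metis dual_order.strict_trans2)
  obtain \<delta> where \<delta>: "\<delta> > 0" "\<forall>v pre. a \<le> v \<and> v < u \<and> u - \<delta> < v \<and> P v (pre x)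
                 \<longrightarrow> P u (seis_update E rc on tr pre x u)"
    using step by blast
  define v where "v = (max (max a (u - \<epsilon>)) (u - \<delta>) + u) / 2"
  have v: "a \<le> v" "v < u" "u - \<delta> < v" "u - \<epsilon> < v"
    using assms(2) \<epsilon> \<delta> unfolding v_def by auto
  have "P v (\<eta> x (u - \<epsilon>/2))" using before[OF v(1,2)] \<epsilon>(3)[OF v(4,2)] by simp
  then show ?thesis using \<delta>(2) v \<epsilon>(4) by auto
qed

lemma time_induct:
  assumes x: "x \<in> V" and ab: "0 \<le> a" "a \<le> b"
    and start: "P a (\<eta> x a)"
    and persist: "\<And>u c. a \<le> u \<Longrightarrow> u < b \<Longrightarrow> P u c \<Longrightarrow> \<exists>\<delta>>0. \<forall>w. u < w \<and> w < u + \<delta> \<longrightarrow> P w c"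
    and step: "\<And>u. a < u \<Longrightarrow> u \<le> b \<Longrightarrow> \<exists>\<delta>>0. \<forall>v pre. a \<le> v \<and> v < u \<and> u - \<delta> < v \<and> P v (pre x)
                 \<longrightarrow> P u (seis_update E rc on tr pre x u)"
  shows "\<forall>u. a \<le> u \<and> u \<le> b \<longrightarrow> P u (\<eta> x u)"
proof -
  define S where "S = {s. a \<le> s \<and> s \<le> b \<and> (\<forall>u. a \<le> u \<and> u \<le> s \<longrightarrow> P u (\<eta> x u))}"
  have aS: "a \<in> S" using ab start unfolding S_def by auto
  have bdd: "bdd_above S" unfolding S_def by (rule bdd_aboveI[of _ b]) auto
  define s0 where "s0 = Sup S"
  have s0a: "a \<le> s0" unfolding s0_def using aS bdd by (rule cSup_upper)
  have s0b: "s0 \<le> b" unfolding s0_def using aS by (intro cSup_least) (auto simp: S_def)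
  have below: "P u (\<eta> x u)" if u: "a \<le> u" "u < s0" for u
  proof -
    obtain s where "s \<in> S" "u < s" using less_cSup_iff[of S u] aS bdd u unfolding s0_def by auto
    then show ?thesis using u unfolding S_def by auto
  qed
  have at: "P s0 (\<eta> x s0)"
  proof (cases "s0 = a")
    case False
    then show ?thesis using update_from_left[OF x _ ab(1) step below] s0a s0b by simp
  qed (use start in simp)
  have "s0 = b"
  proof (rule ccontr)
    assume "s0 \<noteq> b"
    then have lt: "s0 < b" using s0b by auto
    obtain \<epsilon> where \<epsilon>: "\<epsilon> > 0" "\<And>s. s0 \<le> s \<Longrightarrow> s < s0 + \<epsilon> \<Longrightarrow> \<eta> x s = \<eta> x s0"
      using right_constant[OF x, of s0] s0a ab by auto
    obtain \<delta> where \<delta>: "\<delta> > 0" "\<forall>w. s0 < w \<and> w < s0 + \<delta> \<longrightarrow> P w (\<eta> x s0)"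
      using persist[OF s0a lt at] by blast
    define w where "w = min (s0 + min \<epsilon> \<delta> / 2) b"
    have w: "s0 < w" "w \<le> b" "w < s0 + \<epsilon>" "w < s0 + \<delta>"
      using \<epsilon>(1) \<delta>(1) lt unfolding w_def by auto
    have "P u (\<eta> x u)" if "a \<le> u" "u \<le> w" for u
      using below[of u] at \<epsilon>(2)[of u] \<delta>(2) that w by (cases u s0 rule: linorder_cases) auto
    then have "w \<in> S" using w s0a unfolding S_def by auto
    then show False using cSup_upper[OF _ bdd, of w] w unfolding s0_def by simp
  qed
  then show ?thesis using below at by (metis le_less)
qed

lemma infectious_from_left_or_onset:
  assumes x: "x \<in> V" and "0 < t" "\<eta> x t = 2"
  obtains \<epsilon> where "\<epsilon> > 0" "\<epsilon> \<le> t" "\<And>s. t - \<epsilon> < s \<Longrightarrow> s < t \<Longrightarrow> \<eta> x s = 2"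
  | "t \<in> on x" "0 < t"
proof -
  obtain \<epsilon> where \<epsilon>: "\<epsilon> > 0" "\<epsilon> \<le> t"
    "\<And>s. t - \<epsilon> < s \<Longrightarrow> s < t \<Longrightarrow> \<eta> x s = \<eta> x (t - \<epsilon>/2)"
    "\<eta> x t = seis_update E rc on tr (\<lambda>y. \<eta> y (t - \<epsilon>/2)) x t"
    using left_update[OF x assms(2)] x by metis
  show ?thesis
  proof (cases "\<eta> x (t - \<epsilon>/2) = 2")
    case True
    then show ?thesis using that(1)[OF \<epsilon>(1,2)] \<epsilon>(3) by simp
  next
    case False
    then show ?thesis using that(2) seis_update_eq_2[of E rc on tr _ x t] \<epsilon>(4) assms(2,3) by auto
  qed
qed

lemma infectious_since:
  assumes x: "x \<in> V" and s: "0 \<le> s" "\<eta> x s = 2"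
  obtains t0 where "0 \<le> t0" "t0 \<le> s" "\<And>u. t0 \<le> u \<Longrightarrow> u \<le> s \<Longrightarrow> \<eta> x u = 2"
    "t0 = 0 \<or> (0 < t0 \<and> t0 \<in> on x)"
proof -
  define T where "T = {t. 0 \<le> t \<and> t \<le> s \<and> (\<forall>u. t \<le> u \<and> u \<le> s \<longrightarrow> \<eta> x u = 2)}"
  have sT: "s \<in> T" using s unfolding T_def by auto
  have bdd: "bdd_below T" unfolding T_def by (rule bdd_belowI[of _ 0]) auto
  define t0 where "t0 = Inf T"
  have t0s: "t0 \<le> s" unfolding t0_def using sT bdd by (rule cInf_lower)
  have t00: "0 \<le> t0" unfolding t0_def using sT by (intro cInf_greatest) (auto simp: T_def)
  have above: "\<eta> x u = 2" if u: "t0 < u" "u \<le> s" for u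
  proof -
    obtain t where "t \<in> T" "t < u" using cInf_less_iff[of T u] sT bdd u unfolding t0_def by auto
    then show ?thesis using u unfolding T_def by auto
  qed
  have at: "\<eta> x t0 = 2"
  proof (cases "t0 = s")
    case False
    obtain \<epsilon> where \<epsilon>: "\<epsilon> > 0" "\<And>r. t0 \<le> r \<Longrightarrow> r < t0 + \<epsilon> \<Longrightarrow> \<eta> x r = \<eta> x t0"
      using right_constant[OF x t00] by blast
    define w where "w = min (t0 + \<epsilon>/2) s"
    have "t0 < w" "w \<le> s" "w < t0 + \<epsilon>" using \<epsilon>(1) False t0s unfolding w_def by auto
    then show ?thesis using above \<epsilon>(2)[of w] by auto
  qed (use s in simp)
  have since: "\<eta> x u = 2" if "t0 \<le> u" "u \<le> s" for u
    using above at that by (cases "u = t0") auto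
  have "t0 = 0 \<or> (0 < t0 \<and> t0 \<in> on x)"
  proof (cases "t0 = 0")
    case False
    then have "0 < t0" using t00 by simp
    have "0 < t0 \<and> t0 \<in> on x"
    proof (rule infectious_from_left_or_onset[OF x \<open>0 < t0\<close> at])
      fix \<epsilon> assume \<epsilon>: "\<epsilon> > 0" "\<epsilon> \<le> t0" "\<And>s. t0 - \<epsilon> < s \<Longrightarrow> s < t0 \<Longrightarrow> \<eta> x s = 2"
      have "\<eta> x u = 2" if "t0 - \<epsilon>/2 \<le> u" "u \<le> s" for u
        using \<epsilon>(1) \<epsilon>(3)[of u] since[of u] that by (cases "u < t0") auto
      then have "t0 - \<epsilon>/2 \<in> T" using \<epsilon>(1,2) t0s unfolding T_def by auto
      then show ?thesis using cInf_lower[OF _ bdd, of "t0 - \<epsilon>/2"] \<epsilon>(1) unfolding t0_def by simp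
    qed simp
    then show ?thesis by simp
  qed simp
  then show ?thesis using that t00 t0s since by blast
qed

lemma recovery_ends_infection:
  assumes x: "x \<in> V" and "0 \<le> t0" "t0 < s" "\<And>u. t0 \<le> u \<Longrightarrow> u < s \<Longrightarrow> \<eta> x u = 2" "s \<in> rc x"
  shows "\<eta> x s = 0"
proof -
  obtain \<epsilon> where \<epsilon>: "\<epsilon> > 0" "\<epsilon> \<le> s"
    "\<And>r. s - \<epsilon> < r \<Longrightarrow> r < s \<Longrightarrow> \<eta> x r = \<eta> x (s - \<epsilon>/2)"
    "\<eta> x s = seis_update E rc on tr (\<lambda>y. \<eta> y (s - \<epsilon>/2)) x s"
    using left_update[OF x, of s] x assms(2,3) by (metis dual_order.strict_trans2)
  define v where "v = (max t0 (s - \<epsilon>) + s) / 2"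
  have v: "t0 \<le> v" "v < s" "s - \<epsilon> < v" using assms(3) \<epsilon>(1) unfolding v_def by auto
  have "\<eta> x (s - \<epsilon>/2) = 2" using assms(4)[OF v(1,2)] \<epsilon>(3)[OF v(3,2)] by simp
  then show ?thesis using \<epsilon>(4) assms(5) unfolding seis_update_def by simp
qed

end

context seis_trajectory
begin

lemma exposed_then_infectious:
  assumes x: "x \<in> V" and "0 \<le> a" "a < t" "t < b" "\<eta> x a = 1" "t \<in> on x"
    and no_onset: "\<And>s. a < s \<Longrightarrow> s < t \<Longrightarrow> s \<notin> on x"
    and no_recovery: "\<And>s. t < s \<Longrightarrow> s \<le> b \<Longrightarrow> s \<notin> rc x"
  shows "\<And>u. a \<le> u \<Longrightarrow> u < t \<Longrightarrow> \<eta> x u = 1" and "\<And>u. t \<le> u \<Longrightarrow> u \<le> b \<Longrightarrow> \<eta> x u = 2"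
proof -
  let ?P = "\<lambda>u (c::nat). (u < t \<and> c = 1) \<or> (t \<le> u \<and> c = 2)"
  have inv: "\<forall>u. a \<le> u \<and> u \<le> b \<longrightarrow> ?P u (\<eta> x u)"
  proof (rule time_induct[OF x \<open>0 \<le> a\<close>])
    fix u c assume "?P u c"
    then show "\<exists>\<delta>>0. \<forall>w. u < w \<and> w < u + \<delta> \<longrightarrow> ?P w c"
      by (intro exI[of _ "if u < t then t - u else 1"]) auto
  next
    fix u assume u: "a < u" "u \<le> b"
    have "?P u (seis_update E rc on tr pre x u)" if "v < u" "u \<le> t \<or> t \<le> v" "?P v (pre x)"
      for v pre
    proof (cases "u \<le> t")
      case True
      then have "pre x = 1" using that by auto
      moreover have "u = t \<or> (u < t \<and> u \<notin> on x)" using no_onset u True by force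
      ultimately show ?thesis using True \<open>t \<in> on x\<close> unfolding seis_update_def by auto
    next
      case False
      then show ?thesis
        using that no_recovery[of u] u by (auto simp: seis_update_def)
    qed
    then show "\<exists>\<delta>>0. \<forall>v pre. a \<le> v \<and> v < u \<and> u - \<delta> < v \<and> ?P v (pre x)
                 \<longrightarrow> ?P u (seis_update E rc on tr pre x u)"
      by (intro exI[of _ "if u \<le> t then 1 else u - t"]) (auto split: if_splits)
  qed (use assms in auto)
  show "\<eta> x u = 1" if "a \<le> u" "u < t" for u using inv[rule_format, of u] that \<open>t < b\<close> by auto
  show "\<eta> x u = 2" if "t \<le> u" "u \<le> b" for u using inv[rule_format, of u] that \<open>a < t\<close> by auto
qed

lemma exposed_stays_active:
  assumes x: "x \<in> V" and "0 \<le> a" "\<eta> x a = 1"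
    and no_recovery: "\<And>t s. a < t \<Longrightarrow> t < b \<Longrightarrow> t \<in> on x \<Longrightarrow> t < s \<Longrightarrow> s < b \<Longrightarrow> s \<notin> rc x"
    and u: "a < u" "u < b"
  shows "\<eta> x u \<noteq> 0"
proof -
  let ?P = "\<lambda>w c. c = (1::nat) \<or> (c = 2 \<and> (\<exists>t. t \<in> on x \<and> a < t \<and> t \<le> w))"
  have "\<forall>w. a \<le> w \<and> w \<le> u \<longrightarrow> ?P w (\<eta> x w)"
  proof (rule time_induct[OF x \<open>0 \<le> a\<close>])
    fix w c assume "?P w c"
    then show "\<exists>\<delta>>0. \<forall>w'. w < w' \<and> w' < w + \<delta> \<longrightarrow> ?P w' c"
      by (intro exI[of _ 1]) force
  next
    fix w assume w: "a < w" "w \<le> u"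
    have "?P w (seis_update E rc on tr pre x w)" if v: "v < w" "?P v (pre x)" for v pre
    proof (cases "pre x = 1")
      case False
      then obtain t where "pre x = 2" "t \<in> on x" "a < t" "t \<le> v" using v by auto
      moreover have "w \<notin> rc x" using calculation no_recovery[of t w] v w u by auto
      ultimately show ?thesis using v unfolding seis_update_def by auto
    qed (use w in \<open>auto simp: seis_update_def\<close>)
    then show "\<exists>\<delta>>0. \<forall>v pre. a \<le> v \<and> v < w \<and> w - \<delta> < v \<and> ?P v (pre x)
                 \<longrightarrow> ?P w (seis_update E rc on tr pre x w)"
      by (intro exI[of _ 1]) auto
  qed (use assms in auto)
  then have "?P u (\<eta> x u)" using u by simp
  then show ?thesis by auto
qed

lemma transmission_exposes:
  assumes x: "x \<in> V" and y: "y \<in> V" and xy: "{x, y} \<in> E" and "0 \<le> t" "t < b"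
    and infectious: "\<And>u. t \<le> u \<Longrightarrow> u < b \<Longrightarrow> \<eta> x u = 2" and "b \<in> tr {x, y}"
    and "b \<notin> on y" "b \<notin> rc y" "\<eta> y b \<noteq> 2"
  shows "\<eta> y b = 1"
proof -
  obtain \<epsilon> where \<epsilon>: "\<epsilon> > 0" "\<epsilon> \<le> b"
      "\<And>z r. z \<in> V \<Longrightarrow> z = y \<or> {y, z} \<in> E \<Longrightarrow> b - \<epsilon> < r \<Longrightarrow> r < b \<Longrightarrow> \<eta> z r = \<eta> z (b - \<epsilon>/2)"
      "\<eta> y b = seis_update E rc on tr (\<lambda>z. \<eta> z (b - \<epsilon>/2)) y b"
    using left_update[OF y, of b] assms(4,5) by auto
  have yx: "{y, x} \<in> E" "b \<in> tr {y, x}" using xy assms(7) by (simp_all add: insert_commute)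
  define v where "v = (max t (b - \<epsilon>) + b) / 2"
  have v: "t \<le> v" "v < b" "b - \<epsilon> < v" using assms(5) \<epsilon>(1) unfolding v_def by auto
  have "\<eta> x (b - \<epsilon>/2) = 2" using \<epsilon>(3)[OF x _ v(3,2)] yx infectious[OF v(1,2)] by simp
  moreover have "\<eta> y (b - \<epsilon>/2) \<in> {0, 1, 2}" using state_range[OF y] \<epsilon>(1,2) by simp
  ultimately show ?thesis
    using \<epsilon>(4) yx assms(8-10) unfolding seis_update_def by (auto split: if_splits)
qed

end

section \<open>Infections inside an onset-ordered region\<close>

definition vertices_of :: "('v loc \<times> real) set \<Rightarrow> 'v set" where
  "vertices_of R = {x. \<exists>t. (Vtx x, t) \<in> R}"

definition exit_times :: "('v loc \<times> real) set \<Rightarrow> 'v \<Rightarrow> real set" where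
  "exit_times R x = {s. (\<exists>c<s. {Vtx x} \<times> {c..s} \<subseteq> R) \<and> \<not> (\<exists>t>s. {Vtx x} \<times> {s<..<t} \<subseteq> R)}"

definition labels_generic ::
  "'v set set \<Rightarrow> ('v loc \<times> real) set \<Rightarrow> ('v \<Rightarrow> real set) \<Rightarrow> ('v \<Rightarrow> real set) \<Rightarrow> ('v set \<Rightarrow> real set)
    \<Rightarrow> bool" where
  "labels_generic E R rc on tr \<longleftrightarrow>
     (\<forall>x\<in>vertices_of R. \<forall>y\<in>vertices_of R.
        (x \<noteq> y \<longrightarrow> on x \<inter> on y = {}) \<and>
        on y \<inter> exit_times R x = {} \<and>
        ({x, y} \<in> E \<longrightarrow> tr {x, y} \<inter> (rc x \<union> on x) = {}))"

locale seis_in_region = seis_trajectory V E rc on tr \<eta>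
  for V :: "'v set" and E rc on tr \<eta> +
  fixes R :: "('v loc \<times> real) set"
  assumes graph: "graph V E"
    and region: "closure_of_open V E R"
    and ordered: "onset_ordered rc on R"
    and good: "good_for \<eta> R"
    and generic: "labels_generic E R rc on tr"
begin

lemma region_vertex:
  assumes "(Vtx x, t) \<in> R"
  shows "x \<in> V" "0 \<le> t"
  using closure_of_open_subset[OF region] assms unfolding locs_def by auto

lemma edge_distinct: "{x, y} \<in> E \<Longrightarrow> x \<noteq> y"
  using graph unfolding graph_def by (metis doubleton_eq_iff insert_absorb2)

lemma onsets_distinct:
  "x \<noteq> y \<Longrightarrow> (Vtx x, a) \<in> R \<Longrightarrow> (Vtx y, b) \<in> R \<Longrightarrow> t \<in> on x \<Longrightarrow> t \<notin> on y"
  using generic unfolding labels_generic_def vertices_of_def by blast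

lemma onset_not_exit:
  "(Vtx x, a) \<in> R \<Longrightarrow> (Vtx y, b) \<in> R \<Longrightarrow> s \<in> on y \<Longrightarrow> s \<notin> exit_times R x"
  using generic unfolding labels_generic_def vertices_of_def by blast

lemma transmission_not_recovery_or_onset:
  "(Vtx x, a) \<in> R \<Longrightarrow> (Vtx y, b) \<in> R \<Longrightarrow> {x, y} \<in> E \<Longrightarrow> t \<in> tr {x, y} \<Longrightarrow>
     t \<notin> rc x \<and> t \<notin> on x"
  using generic unfolding labels_generic_def vertices_of_def by blast

text \<open>Goodness of \<eta> for R rules out that x was infectious when its line entered R, so the
  infection began with an onset inside R.\<close>

lemma infectious_since_onset:
  assumes s: "(Vtx x, s) \<in> R" "\<eta> x s = 2"
  obtains t0 where "0 < t0" "t0 \<le> s" "t0 \<in> on x"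
    "\<And>u. t0 \<le> u \<Longrightarrow> u \<le> s \<Longrightarrow> \<eta> x u = 2 \<and> (Vtx x, u) \<in> R"
proof -
  obtain t0 where t0: "0 \<le> t0" "t0 \<le> s" "\<And>u. t0 \<le> u \<Longrightarrow> u \<le> s \<Longrightarrow> \<eta> x u = 2"
    "t0 = 0 \<or> (0 < t0 \<and> t0 \<in> on x)"
    using infectious_since[OF region_vertex[OF s(1)] s(2)] by blast
  have not_base: "(Vtx x, u) \<notin> base_of R" if "t0 \<le> u" "u \<le> s" for u
    using good t0(3)[OF that] unfolding good_for_def by auto
  have inR: "(Vtx x, u) \<in> R" if u: "t0 \<le> u" "u \<le> s" for u
  proof (rule ccontr)
    assume "(Vtx x, u) \<notin> R"
    moreover have "0 \<le> u" using t0(1) u(1) by simp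
    ultimately obtain v where "u < v" "v \<le> s" "(Vtx x, v) \<in> base_of R"
      using closure_of_open_base_between[OF region _ u(2) s(1)] by blast
    then show False using not_base[of v] u by simp
  qed
  have "t0 \<noteq> 0"
  proof
    assume "t0 = 0"
    then have "(Vtx x, 0) \<in> base_of R"
      using closure_of_open_base_zero[OF region inR[of 0]] t0(2) by simp
    then show False using not_base[of 0] \<open>t0 = 0\<close> t0(2) by simp
  qed
  then have "0 < t0" "t0 \<in> on x" using t0(4) by auto
  then show ?thesis using that t0(2,3) inR by blast
qed

text \<open>Onset-ordering forces a recovery of x between its onset tx and the later onset ty,
  which would end the infection of x; if ty is the last time x is in R, then ty would be an
  exit time of x.\<close>

lemma no_onset_while_infectious:
  assumes "0 < tx" "tx < ty" "ty \<le> s" "tx \<in> on x"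
    and infected: "\<And>u. tx \<le> u \<Longrightarrow> u \<le> s \<Longrightarrow> \<eta> x u = 2 \<and> (Vtx x, u) \<in> R"
    and "ty \<in> on y" "(Vtx y, ty) \<in> R"
  shows False
proof -
  have xR: "(Vtx x, tx) \<in> R" using infected assms(2,3) by simp
  have interval_ends: False if t': "ty < t'" "{Vtx x} \<times> {tx<..<t'} \<subseteq> R" for t'
  proof -
    obtain s' where s': "tx < s'" "s' < ty" "s' \<in> rc x"
      using ordered xR t' assms(2,4,6,7) unfolding onset_ordered_def by (meson less_trans)
    have "\<eta> x s' = 0"
      using recovery_ends_infection[OF region_vertex(1)[OF xR] _ s'(1) _ s'(3)] infected s' assms(1,3)
      by fastforce
    then show False using infected[of s'] s' assms(3) by simp
  qed
  show False
  proof (cases "ty < s")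
    case True
    then show False using interval_ends[of s] infected by fastforce
  next
    case False
    then have "ty = s" using assms(3) by simp
    show False
    proof (cases "\<exists>t'>s. {Vtx x} \<times> {s<..<t'} \<subseteq> R")
      case True
      then obtain t' where t': "s < t'" "{Vtx x} \<times> {s<..<t'} \<subseteq> R" by blast
      have "(Vtx x, r) \<in> R" if "tx < r" "r < t'" for r
        using infected[of r] t'(2) that by (cases "r \<le> s") auto
      then have "{Vtx x} \<times> {tx<..<t'} \<subseteq> R" by auto
      then show False using interval_ends[of t'] t'(1) \<open>ty = s\<close> by simp
    next
      case False
      then have "s \<in> exit_times R x"
        using infected assms(2,3) unfolding exit_times_def by (intro CollectI conjI exI[of _ tx]) auto
      then show False using onset_not_exit[OF xR assms(7,6)] \<open>ty = s\<close> by simp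
    qed
  qed
qed

lemma infectious_unique:
  assumes "(Vtx x, t) \<in> R" "(Vtx y, t) \<in> R" "\<eta> x t = 2" "\<eta> y t = 2"
  shows "x = y"
proof (rule ccontr)
  assume "x \<noteq> y"
  obtain tx where tx: "0 < tx" "tx \<le> t" "tx \<in> on x"
    "\<And>u. tx \<le> u \<Longrightarrow> u \<le> t \<Longrightarrow> \<eta> x u = 2 \<and> (Vtx x, u) \<in> R"
    using infectious_since_onset[OF assms(1,3)] by blast
  obtain ty where ty: "0 < ty" "ty \<le> t" "ty \<in> on y"
    "\<And>u. ty \<le> u \<Longrightarrow> u \<le> t \<Longrightarrow> \<eta> y u = 2 \<and> (Vtx y, u) \<in> R"
    using infectious_since_onset[OF assms(2,4)] by blast
  have "tx \<noteq> ty" using onsets_distinct[OF \<open>x \<noteq> y\<close> assms(1,2) tx(3)] ty(3) by auto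
  then consider "tx < ty" | "ty < tx" by linarith
  then show False
    by cases (use no_onset_while_infectious tx ty in blast)+
qed

end

lemma is_path_time_nonneg:
  assumes "is_path E xs ts" "i \<le> length xs"
  shows "0 \<le> ts ! i"
  using assms(2)
proof (induction i)
  case (Suc i)
  then have "0 \<le> ts ! i" "ts ! i < ts ! (i+1)" using assms(1) unfolding is_path_def by auto
  then show ?case by simp
qed (use assms(1) in \<open>simp add: is_path_def\<close>)

lemma path_set_segment:
  "i < length xs \<Longrightarrow> {Vtx (xs ! i)} \<times> {ts ! i<..<ts ! (i+1)} \<subseteq> path_set xs ts"
  unfolding path_set_def by blast

context seis_in_region
begin

text \<open>By uniqueness of infectious vertices, y is not infectious when the transmission label at b
  fires, so the label exposes it.\<close>

lemma transmission_step:
  assumes xy: "{x, y} \<in> E" and "0 \<le> a" "a < t" "t < b" "\<eta> x a = 1"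
    and segment: "{Vtx x} \<times> {a<..<b} \<subseteq> R" and yR: "(Vtx y, b) \<in> R"
    and "b \<in> tr {x, y}" "t \<in> on x"
    and no_onset: "\<And>s. a < s \<Longrightarrow> s < t \<Longrightarrow> s \<notin> on x"
    and no_recovery: "\<And>s. t < s \<Longrightarrow> s < b \<Longrightarrow> s \<notin> rc x"
  shows "\<And>u. a < u \<Longrightarrow> u < b \<Longrightarrow> \<eta> x u \<noteq> 0" "\<eta> x b = 2" "\<eta> y b = 1"
proof -
  have ab: "a < b" using assms(3,4) by simp
  have xR: "(Vtx x, a) \<in> R" "(Vtx x, b) \<in> R"
    using closure_of_open_interval_endpoints[OF region ab \<open>0 \<le> a\<close> segment] by auto
  have x: "x \<in> V" and y: "y \<in> V" using region_vertex xR yR by auto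
  have "b \<notin> rc x" using transmission_not_recovery_or_onset[OF xR(1) yR xy \<open>b \<in> tr {x, y}\<close>] by simp
  moreover have "b \<notin> rc y" "b \<notin> on y"
    using transmission_not_recovery_or_onset[OF yR xR(1), of b] xy \<open>b \<in> tr {x, y}\<close>
    by (simp_all add: insert_commute)
  moreover have "\<And>s. t < s \<Longrightarrow> s \<le> b \<Longrightarrow> s \<notin> rc x"
    using no_recovery calculation(1) by (metis order_le_less)
  then have one: "\<And>u. a \<le> u \<Longrightarrow> u < t \<Longrightarrow> \<eta> x u = 1"
    and two: "\<And>u. t \<le> u \<Longrightarrow> u \<le> b \<Longrightarrow> \<eta> x u = 2"
    using exposed_then_infectious[OF x assms(2-5,9) no_onset] by blast+
  moreover have "\<eta> y b \<noteq> 2"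
    using infectious_unique[OF xR(2) yR two[of b]] edge_distinct[OF xy] assms(4) by auto
  ultimately show "\<eta> y b = 1"
    using transmission_exposes[OF x y xy _ \<open>t < b\<close> _ \<open>b \<in> tr {x, y}\<close>] assms(2,3) by simp
  show "\<eta> x b = 2" using two assms(4) by simp
  show "\<eta> x u \<noteq> 0" if "a < u" "u < b" for u
    using one[of u] two[of u] that by (cases "u < t") auto
qed

lemma path_vertex_in_region:
  assumes path: "is_path E xs ts" and "path_set xs ts \<subseteq> R" "i < length xs"
  shows "{Vtx (xs ! i)} \<times> {ts ! i<..<ts ! (i+1)} \<subseteq> R" "(Vtx (xs ! i), ts ! i) \<in> R"
proof -
  show segment: "{Vtx (xs ! i)} \<times> {ts ! i<..<ts ! (i+1)} \<subseteq> R"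
    using path_set_segment assms(2,3) by blast
  have "ts ! i < ts ! (i+1)" using path assms(3) unfolding is_path_def by blast
  then show "(Vtx (xs ! i), ts ! i) \<in> R"
    using closure_of_open_interval_endpoints[OF region _ _ segment] is_path_time_nonneg[OF path] assms(3)
    by simp
qed

lemma potentially_active_link:
  assumes path: "is_path E xs ts" and pa: "potentially_active rc on tr xs ts"
    and inR: "path_set xs ts \<subseteq> R" and i: "i + 1 < length xs"
    and exposed: "\<eta> (xs ! i) (ts ! i) = 1"
  shows "\<And>u. ts ! i < u \<Longrightarrow> u < ts ! (i+1) \<Longrightarrow> \<eta> (xs ! i) u \<noteq> 0"
    "\<eta> (xs ! i) (ts ! (i+1)) = 2" "\<eta> (xs ! (i+1)) (ts ! (i+1)) = 1"
proof -
  obtain t where "ts ! i < t" "t < ts ! (i+1)" "t \<in> on (xs ! i)"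
    "\<forall>s. ts ! i < s \<and> s < t \<longrightarrow> s \<notin> on (xs ! i)"
    "\<forall>s. t < s \<and> s < ts ! (i+1) \<longrightarrow> s \<notin> rc (xs ! i)"
    using pa i unfolding potentially_active_def by blast
  moreover have "ts ! (i+1) \<in> tr {xs ! i, xs ! (i+1)}" "{xs ! i, xs ! (i+1)} \<in> E"
    using pa path i unfolding potentially_active_def is_path_def by blast+
  moreover have "0 \<le> ts ! i" using is_path_time_nonneg[OF path] i by simp
  ultimately show "\<And>u. ts ! i < u \<Longrightarrow> u < ts ! (i+1) \<Longrightarrow> \<eta> (xs ! i) u \<noteq> 0"
    "\<eta> (xs ! i) (ts ! (i+1)) = 2" "\<eta> (xs ! (i+1)) (ts ! (i+1)) = 1"
    using transmission_step[OF _ _ _ _ exposed path_vertex_in_region(1)[OF path inR]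
        path_vertex_in_region(2)[OF path inR, of "i+1"]] i
    by auto
qed

lemma potentially_active_last_segment:
  assumes path: "is_path E xs ts" and pa: "potentially_active rc on tr xs ts"
    and inR: "path_set xs ts \<subseteq> R" and k: "length xs = Suc k"
    and exposed: "\<eta> (xs ! k) (ts ! k) = 1" and u: "ts ! k < u" "u < ts ! Suc k"
  shows "\<eta> (xs ! k) u \<noteq> 0"
proof (rule exposed_stays_active[OF _ _ exposed _ u])
  show "xs ! k \<in> V" using region_vertex(1)[OF path_vertex_in_region(2)[OF path inR]] k by simp
  show "0 \<le> ts ! k" using is_path_time_nonneg[OF path] k by simp
  show "s \<notin> rc (xs ! k)" if "ts ! k < t" "t < ts ! Suc k" "t \<in> on (xs ! k)" "t < s" "s < ts ! Suc k"
    for t s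
    using pa k that unfolding potentially_active_def Let_def by auto
qed

lemma potentially_active_path_active:
  assumes path: "is_path E xs ts" and pa: "potentially_active rc on tr xs ts"
    and inR: "path_set xs ts \<subseteq> R" and start: "\<eta> (hd xs) (ts ! 0) = 1"
  shows "active_path tr \<eta> xs ts"
proof -
  note link = potentially_active_link[OF path pa inR]
  have exposed: "\<eta> (xs ! i) (ts ! i) = 1" if "i < length xs" for i
    using that
  proof (induction i)
    case 0
    then show ?case using start by (cases xs) auto
  next
    case (Suc i)
    then show ?case using link(3)[of i] by simp
  qed
  have "\<eta> (xs ! i) u \<noteq> 0" if "i < length xs" "ts ! i < u" "u < ts ! (i+1)" for i u
  proof (cases "i + 1 < length xs")
    case True
    then show ?thesis using link(1)[OF True exposed] that by simp
  next
    case False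
    then show ?thesis
      using potentially_active_last_segment[OF path pa inR _ exposed] that by simp
  qed
  moreover have "ts ! (i+1) \<in> tr {xs ! i, xs ! (i+1)}" if "i + 1 < length xs" for i
    using pa that unfolding potentially_active_def by simp
  ultimately show ?thesis
    using link(2,3) exposed unfolding active_path_def by simp
qed

end

section \<open>Almost sure genericity of the labels\<close>

lemma (in prob_space) distributed_point_null:
  assumes "distributed M lborel Z f"
  shows "{\<omega> \<in> space M. Z \<omega> = (c::real)} \<in> null_sets M"
proof -
  have Z: "Z \<in> measurable M lborel" using assms by (simp add: distributed_def)
  have "emeasure M (Z -` {c} \<inter> space M) = (\<integral>\<^sup>+x. f x * indicator {c} x \<partial>lborel)"
    using distributed_emeasure[OF assms, of "{c}"] by simp
  also have "\<dots> = 0"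
  proof -
    have "AE x in lborel. f x * indicator {c} x = (0::ennreal)"
      using AE_lborel_singleton[of c] by eventually_elim simp
    then show ?thesis by (simp add: nn_integral_0_iff_AE)
  qed
  moreover have "{\<omega> \<in> space M. Z \<omega> = c} = Z -` {c} \<inter> space M" by auto
  ultimately show ?thesis using measurable_sets[OF Z, of "{c}"] by (simp add: null_sets_def)
qed

lemma (in prob_space) indep_var_eq_null:
  fixes A Z :: "'a \<Rightarrow> real"
  assumes indep: "indep_var borel A borel Z" and Z: "distributed M lborel Z f"
  shows "{\<omega> \<in> space M. Z \<omega> = A \<omega>} \<in> null_sets M"
proof -
  have A: "random_variable borel A" and Zm: "random_variable borel Z"
    using indep_var_rv1[OF indep] indep_var_rv2[OF indep] .
  interpret PZ: prob_space "distr M borel Z" by (rule prob_space_distr[OF Zm])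
  define D where "D = {p \<in> space (borel \<Otimes>\<^sub>M borel). snd p = (fst p :: real)}"
  have D: "D \<in> sets (borel \<Otimes>\<^sub>M borel)" unfolding D_def by measurable
  have AZ: "(\<lambda>\<omega>. (A \<omega>, Z \<omega>)) \<in> measurable M (borel \<Otimes>\<^sub>M borel)" using A Zm by measurable
  have eq: "{\<omega> \<in> space M. Z \<omega> = A \<omega>} = (\<lambda>\<omega>. (A \<omega>, Z \<omega>)) -` D \<inter> space M"
    unfolding D_def by (auto simp: space_pair_measure)
  have "emeasure M ((\<lambda>\<omega>. (A \<omega>, Z \<omega>)) -` D \<inter> space M)
      = emeasure (distr M borel A \<Otimes>\<^sub>M distr M borel Z) D"
    using emeasure_distr[OF AZ D] indep_var_distribution_eq[of borel A borel Z] indep by simp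
  also have "\<dots> = (\<integral>\<^sup>+a. emeasure (distr M borel Z) (Pair a -` D) \<partial>distr M borel A)"
  proof -
    have "sets (distr M borel A \<Otimes>\<^sub>M distr M borel Z) = sets (borel \<Otimes>\<^sub>M borel)"
      by (intro sets_pair_measure_cong) simp_all
    then show ?thesis using D by (intro PZ.emeasure_pair_measure_alt) simp
  qed
  also have "\<dots> = (\<integral>\<^sup>+a. 0 \<partial>distr M borel A)"
  proof (intro nn_integral_cong)
    fix a :: real
    have "Pair a -` D = {a}" unfolding D_def by (auto simp: space_pair_measure)
    moreover have "Z -` {a} \<inter> space M = {\<omega> \<in> space M. Z \<omega> = a}" by auto
    ultimately show "emeasure (distr M borel Z) (Pair a -` D) = 0"
      using emeasure_distr[OF Zm, of "{a}"] null_setsD1[OF distributed_point_null[OF Z, of a]] by simp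
  qed
  finally show ?thesis using eq measurable_sets[OF AZ D] by (simp add: null_sets_def)
qed

lemma (in prob_space) indep_vars_single_null:
  fixes X :: "'i \<Rightarrow> 'a \<Rightarrow> real"
  assumes indep: "indep_vars (\<lambda>_. borel) X I" and "J \<subseteq> I" "i \<in> I" "i \<notin> J"
    and d: "distributed M lborel (X i) f" and h: "h \<in> borel_measurable (PiM J (\<lambda>_. borel))"
  shows "{\<omega> \<in> space M. X i \<omega> = h (\<lambda>j\<in>J. X j \<omega>)} \<in> null_sets M"
proof -
  have "indep_var (PiM J (\<lambda>_. borel)) (\<lambda>\<omega>. \<lambda>j\<in>J. X j \<omega>) (PiM {i} (\<lambda>_. borel)) (\<lambda>\<omega>. \<lambda>j\<in>{i}. X j \<omega>)"
    using assms(2-4) by (intro indep_var_restrict[OF indep]) auto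
  then have "indep_var borel (h \<circ> (\<lambda>\<omega>. \<lambda>j\<in>J. X j \<omega>)) borel ((\<lambda>v. v i) \<circ> (\<lambda>\<omega>. \<lambda>j\<in>{i}. X j \<omega>))"
    by (rule indep_var_compose[OF _ h]) simp
  then have "indep_var borel (\<lambda>\<omega>. h (\<lambda>j\<in>J. X j \<omega>)) borel (X i)"
    by (simp add: comp_def)
  from indep_var_eq_null[OF this d] show ?thesis .
qed

text \<open>arrival X \<sigma> n is the (n+1)-st label time of the stream of clocks \<sigma>.\<close>

definition arrival :: "('c \<Rightarrow> 'w \<Rightarrow> real) \<Rightarrow> (nat \<Rightarrow> 'c) \<Rightarrow> nat \<Rightarrow> 'w \<Rightarrow> real" where
  "arrival X \<sigma> n \<omega> = (\<Sum>k\<le>n. X (\<sigma> k) \<omega>)"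

lemma arrivals_eq_range_arrival: "arrivals (\<lambda>k. X (\<sigma> k) \<omega>) = range (\<lambda>n. arrival X \<sigma> n \<omega>)"
  by (simp add: arrivals_def arrival_def)

lemma (in prob_space) arrival_eq_null:
  fixes X :: "'c \<Rightarrow> 'a \<Rightarrow> real"
  assumes indep: "indep_vars (\<lambda>_. borel) X I" and "range \<sigma> \<subseteq> I"
    and J: "J \<subseteq> I" "\<sigma> ` {..<n} \<subseteq> J" "\<sigma> n \<notin> J"
    and d: "distributed M lborel (X (\<sigma> n)) f" and h: "h \<in> borel_measurable (PiM J (\<lambda>_. borel))"
  shows "{\<omega> \<in> space M. arrival X \<sigma> n \<omega> = h (\<lambda>j\<in>J. X j \<omega>)} \<in> null_sets M"
proof -
  define g where "g v = h v - (\<Sum>k<n. v (\<sigma> k))" for v :: "'c \<Rightarrow> real"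
  have "g \<in> borel_measurable (PiM J (\<lambda>_. borel))"
    unfolding g_def using h J(2) by (intro borel_measurable_diff borel_measurable_sum) auto
  then have "{\<omega> \<in> space M. X (\<sigma> n) \<omega> = g (\<lambda>j\<in>J. X j \<omega>)} \<in> null_sets M"
    using assms(2) by (intro indep_vars_single_null[OF indep J(1) _ J(3) d]) auto
  moreover have "arrival X \<sigma> n \<omega> = X (\<sigma> n) \<omega> + (\<Sum>k<n. X (\<sigma> k) \<omega>)" for \<omega>
    unfolding arrival_def lessThan_Suc_atMost[symmetric] by simp
  moreover have "(\<Sum>k<n. (\<lambda>j\<in>J. X j \<omega>) (\<sigma> k)) = (\<Sum>k<n. X (\<sigma> k) \<omega>)" for \<omega>
    using J(2) by (intro sum.cong) auto
  ultimately show ?thesis unfolding g_def by (simp add: algebra_simps)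
qed

lemma (in prob_space) arrivals_coincide_null:
  fixes X :: "'c \<Rightarrow> 'a \<Rightarrow> real"
  assumes indep: "indep_vars (\<lambda>_. borel) X I" and "inj \<sigma>" "range \<sigma> \<subseteq> I" "range \<tau> \<subseteq> I"
    and disjoint: "range \<sigma> \<inter> range \<tau> = {}"
    and d: "distributed M lborel (X (\<sigma> n)) f"
  shows "{\<omega> \<in> space M. arrival X \<sigma> n \<omega> = arrival X \<tau> m \<omega>} \<in> null_sets M"
proof -
  define J where "J = \<sigma> ` {..<n} \<union> \<tau> ` {..m}"
  have "\<sigma> n \<notin> J" using \<open>inj \<sigma>\<close> disjoint unfolding J_def by (auto dest: injD)
  moreover have "(\<lambda>v. \<Sum>k\<le>m. v (\<tau> k) :: real) \<in> borel_measurable (PiM J (\<lambda>_. borel))"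
    unfolding J_def by (intro borel_measurable_sum measurable_component_singleton) auto
  ultimately have "{\<omega> \<in> space M. arrival X \<sigma> n \<omega> = (\<Sum>k\<le>m. (\<lambda>j\<in>J. X j \<omega>) (\<tau> k))} \<in> null_sets M"
    using assms(3,4) unfolding J_def by (intro arrival_eq_null[of X I \<sigma> _ n f, OF indep _ _ _ _ d]) auto
  moreover have "(\<Sum>k\<le>m. (\<lambda>j\<in>J. X j \<omega>) (\<tau> k)) = arrival X \<tau> m \<omega>" for \<omega>
    unfolding arrival_def J_def by (intro sum.cong) auto
  ultimately show ?thesis by simp
qed

lemma (in prob_space) arrival_point_null:
  fixes X :: "'c \<Rightarrow> 'a \<Rightarrow> real"
  assumes indep: "indep_vars (\<lambda>_. borel) X I" and "inj \<sigma>" "range \<sigma> \<subseteq> I"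
    and d: "distributed M lborel (X (\<sigma> n)) f"
  shows "{\<omega> \<in> space M. arrival X \<sigma> n \<omega> = c} \<in> null_sets M"
proof -
  have "{\<omega> \<in> space M. arrival X \<sigma> n \<omega> = (\<lambda>_. c) (\<lambda>j\<in>\<sigma> ` {..<n}. X j \<omega>)} \<in> null_sets M"
    using assms(2,3) by (intro arrival_eq_null[of X I \<sigma> "\<sigma> ` {..<n}" n f, OF indep _ _ _ _ d])
      (auto dest: injD)
  then show ?thesis by simp
qed

locale clock_streams = prob_space +
  fixes X :: "'c \<Rightarrow> 'a \<Rightarrow> real" and I :: "'c set" and S :: "(nat \<Rightarrow> 'c) set"
  assumes indep: "indep_vars (\<lambda>_. borel) X I"
    and countable_streams: "countable S"
    and stream: "\<And>\<sigma>. \<sigma> \<in> S \<Longrightarrow> inj \<sigma> \<and> range \<sigma> \<subseteq> I \<and> (\<forall>n. \<exists>f. distributed M lborel (X (\<sigma> n)) f)"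
begin

lemma AE_arrivals_distinct:
  "AE \<omega> in M. \<forall>\<sigma>\<in>S. \<forall>\<tau>\<in>S. range \<sigma> \<inter> range \<tau> = {} \<longrightarrow>
     (\<forall>n m. arrival X \<sigma> n \<omega> \<noteq> arrival X \<tau> m \<omega>)"
proof -
  have "AE \<omega> in M. arrival X \<sigma> n \<omega> \<noteq> arrival X \<tau> m \<omega>"
    if "\<sigma> \<in> S" "\<tau> \<in> S" "range \<sigma> \<inter> range \<tau> = {}" for \<sigma> \<tau> n m
  proof -
    obtain f where "distributed M lborel (X (\<sigma> n)) f" using stream[OF \<open>\<sigma> \<in> S\<close>] by blast
    then have "{\<omega> \<in> space M. arrival X \<sigma> n \<omega> = arrival X \<tau> m \<omega>} \<in> null_sets M"
      using stream[OF that(1)] stream[OF that(2)] that(3) by (intro arrivals_coincide_null[OF indep]) auto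
    then show ?thesis by (rule AE_I') auto
  qed
  then show ?thesis
    by (cases "S = {}") (auto simp: AE_ball_countable[OF countable_streams] AE_all_countable)
qed

lemma AE_arrivals_avoid:
  assumes "countable C"
  shows "AE \<omega> in M. \<forall>\<sigma>\<in>S. \<forall>n. arrival X \<sigma> n \<omega> \<notin> C"
proof -
  have point: "AE \<omega> in M. arrival X \<sigma> n \<omega> \<noteq> c" if "\<sigma> \<in> S" for \<sigma> n c
  proof -
    obtain f where "distributed M lborel (X (\<sigma> n)) f" using stream[OF \<open>\<sigma> \<in> S\<close>] by blast
    then have "{\<omega> \<in> space M. arrival X \<sigma> n \<omega> = c} \<in> null_sets M"
      using stream[OF that] by (intro arrival_point_null[OF indep]) auto
    then show ?thesis by (rule AE_I') auto
  qed
  have "AE \<omega> in M. arrival X \<sigma> n \<omega> \<notin> C" if "\<sigma> \<in> S" for \<sigma> n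
  proof -
    have "AE \<omega> in M. \<forall>c\<in>C. arrival X \<sigma> n \<omega> \<noteq> c"
      using point[OF that] by (simp add: AE_ball_countable[OF assms])
    then show ?thesis by eventually_elim auto
  qed
  then show ?thesis by (simp add: AE_ball_countable[OF countable_streams] AE_all_countable)
qed

end

lemma exit_times_countable: "countable (exit_times R x)"
proof -
  have "\<exists>r. r \<in> \<rat> \<and> r < s \<and> {Vtx x} \<times> {r..s} \<subseteq> R" if s: "s \<in> exit_times R x" for s
  proof -
    obtain c where "c < s" "{Vtx x} \<times> {c..s} \<subseteq> R" using s unfolding exit_times_def by blast
    moreover obtain r where "r \<in> \<rat>" "c < r" "r < s" using Rats_dense_in_real[OF \<open>c < s\<close>] by blast
    ultimately show ?thesis by (intro exI[of _ r]) auto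
  qed
  then obtain q where q: "\<And>s. s \<in> exit_times R x \<Longrightarrow> q s \<in> \<rat> \<and> q s < s \<and> {Vtx x} \<times> {q s..s} \<subseteq> R"
    by metis
  \<comment> \<open>Two exit times s1 < s2 with the same q would put (s1, s2) inside R.\<close>
  have "inj_on q (exit_times R x)"
  proof (rule inj_onI, rule ccontr)
    fix s1 s2 assume s: "s1 \<in> exit_times R x" "s2 \<in> exit_times R x" "q s1 = q s2" "s1 \<noteq> s2"
    then have "{Vtx x} \<times> {q s1..max s1 s2} \<subseteq> R" "q s1 < min s1 s2"
      using q[OF s(1)] q[OF s(2)] by (auto simp: max_def)
    then have "{Vtx x} \<times> {min s1 s2<..<max s1 s2} \<subseteq> R" by fastforce
    then show False using s unfolding exit_times_def min_def max_def by (auto split: if_splits)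
  qed
  moreover have "q ` exit_times R x \<subseteq> \<rat>" using q by auto
  ultimately show ?thesis using countable_rat countable_subset countable_image_inj_on by metis
qed

lemma AE_labels_generic:
  assumes "prob_space M" and rep: "graphical_rep M V E lam tau X"
    and R: "closure_of_open V E R" and countable_W: "countable (vertices_of R)"
  shows "AE \<omega> in M. labels_generic E R (rec_lab X \<omega>) (ons_lab X \<omega>) (tra_lab X \<omega>)"
proof -
  interpret prob_space M by fact
  define W where "W = vertices_of R"
  have WV: "W \<subseteq> V"
    using closure_of_open_subset[OF R] unfolding W_def vertices_of_def locs_def by auto
  define EW where "EW = {e \<in> E. \<exists>x\<in>W. \<exists>y\<in>W. e = {x, y}}"
  have "EW \<subseteq> (\<lambda>(x, y). {x, y}) ` (W \<times> W)" unfolding EW_def by auto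
  then have "countable EW" using countable_W unfolding W_def by (auto intro: countable_subset)
  define S where "S = RecC ` W \<union> OnsC ` W \<union> TraC ` EW"
  interpret clock_streams M X "clock_index V E" S
  proof
    show "indep_vars (\<lambda>_. borel) X (clock_index V E)" using rep unfolding graphical_rep_def by blast
    show "countable S" unfolding S_def using countable_W \<open>countable EW\<close> W_def by auto
    fix \<sigma> assume "\<sigma> \<in> S"
    then show "inj \<sigma> \<and> range \<sigma> \<subseteq> clock_index V E \<and> (\<forall>n. \<exists>f. distributed M lborel (X (\<sigma> n)) f)"
      using rep WV unfolding S_def EW_def clock_index_def graphical_rep_def inj_def by (auto; blast)
  qed
  define C where "C = (\<Union>x\<in>W. exit_times R x)"
  have "countable C" unfolding C_def W_def by (intro countable_UN countable_W exit_times_countable)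
  have labels: "rec_lab X \<omega> x = range (\<lambda>n. arrival X (RecC x) n \<omega>)"
    "ons_lab X \<omega> x = range (\<lambda>n. arrival X (OnsC x) n \<omega>)"
    "tra_lab X \<omega> e = range (\<lambda>n. arrival X (TraC e) n \<omega>)" for \<omega> x e
    unfolding rec_lab_def ons_lab_def tra_lab_def arrivals_eq_range_arrival by rule+
  show ?thesis
    using AE_arrivals_distinct AE_arrivals_avoid[OF \<open>countable C\<close>]
  proof eventually_elim
    case (elim \<omega>)
    have "x \<noteq> y \<longrightarrow> ons_lab X \<omega> x \<inter> ons_lab X \<omega> y = {}" if "x \<in> W" "y \<in> W" for x y
      using elim(1) that unfolding labels S_def by blast
    moreover have "ons_lab X \<omega> y \<inter> exit_times R x = {}" if "x \<in> W" "y \<in> W" for x y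
      using elim(2) that unfolding labels S_def C_def by blast
    moreover have "tra_lab X \<omega> {x, y} \<inter> (rec_lab X \<omega> x \<union> ons_lab X \<omega> x) = {}"
      if "x \<in> W" "y \<in> W" "{x, y} \<in> E" for x y
    proof -
      have "{x, y} \<in> EW" using that unfolding EW_def by blast
      then have "TraC {x, y} \<in> S" "RecC x \<in> S" "OnsC x \<in> S" using that unfolding S_def by auto
      then show ?thesis using elim(1) unfolding labels by blast
    qed
    ultimately show ?case unfolding labels_generic_def W_def by blast
  qed
qed

section \<open>Regions meeting uncountably many vertices\<close>

lemma uncountable_fiber_infinite:
  assumes "\<not> countable A" "countable (f ` A)"
  obtains b where "infinite {x \<in> A. f x = b}"
proof -
  have "\<not> (\<forall>b\<in>f ` A. countable {x \<in> A. f x = b})"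
  proof
    assume "\<forall>b\<in>f ` A. countable {x \<in> A. f x = b}"
    then have "countable (\<Union>b\<in>f ` A. {x \<in> A. f x = b})" using assms(2) by (intro countable_UN) auto
    moreover have "(\<Union>b\<in>f ` A. {x \<in> A. f x = b}) = A" by auto
    ultimately show False using assms(1) by simp
  qed
  then show ?thesis using that countable_finite by blast
qed

lemma closure_of_open_uncountable_common_interval:
  assumes R: "closure_of_open V E R" and "\<not> countable (vertices_of R)"
  obtains xs :: "nat \<Rightarrow> 'v" and p q where "inj xs" "range xs \<subseteq> vertices_of R" "0 \<le> p" "p < q"
    "\<And>k. {Vtx (xs k)} \<times> {p<..<q} \<subseteq> R"
proof -
  define good_interval where "good_interval x pq \<longleftrightarrow> pq \<in> \<rat> \<times> \<rat> \<and> 0 \<le> fst pq \<and> fst pq < snd pq \<and>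
      {Vtx x} \<times> {fst pq<..<snd pq} \<subseteq> R" for x pq
  have "\<exists>pq. good_interval x pq" if x: "x \<in> vertices_of R" for x
  proof -
    obtain t where "(Vtx x, t) \<in> R" using x unfolding vertices_of_def by blast
    then show ?thesis unfolding good_interval_def
      by (rule closure_of_open_rational_interval[OF R]) (auto intro!: exI[of _ "(p, q)" for p q])
  qed
  then obtain F where F: "\<And>x. x \<in> vertices_of R \<Longrightarrow> good_interval x (F x)" by metis
  have "F ` vertices_of R \<subseteq> \<rat> \<times> \<rat>" using F unfolding good_interval_def by blast
  then have "countable (F ` vertices_of R)"
    by (rule countable_subset) (intro countable_SIGMA countable_rat)
  then obtain pq where "infinite {x \<in> vertices_of R. F x = pq}"
    using uncountable_fiber_infinite assms(2) by blast
  then obtain xs :: "nat \<Rightarrow> 'v" where "inj xs" "range xs \<subseteq> {x \<in> vertices_of R. F x = pq}"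
    using infinite_countable_subset by blast
  moreover have "good_interval (xs k) pq" for k
  proof -
    have "xs k \<in> vertices_of R" "F (xs k) = pq" using calculation(2) by auto
    then show ?thesis using F by metis
  qed
  ultimately show ?thesis using that[of xs "fst pq" "snd pq"] unfolding good_interval_def by blast
qed

lemma (in prob_space) exponential_distributed_interval:
  assumes d: "distributed M lborel Z (exponential_density l)" and "0 \<le> a" "a \<le> b" "0 < l"
  shows "prob (Z -` {a<..b} \<inter> space M) = exp (- a * l) - exp (- b * l)"
proof -
  have Z: "Z \<in> measurable M lborel" using d by (simp add: distributed_def)
  have "Z -` {a<..b} \<inter> space M = {\<omega> \<in> space M. a < Z \<omega>} - {\<omega> \<in> space M. b < Z \<omega>}" by auto
  moreover have "{\<omega> \<in> space M. a < Z \<omega>} \<in> events" "{\<omega> \<in> space M. b < Z \<omega>} \<in> events"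
    using Z by measurable
  moreover have "{\<omega> \<in> space M. b < Z \<omega>} \<subseteq> {\<omega> \<in> space M. a < Z \<omega>}" using assms(3) by auto
  ultimately show ?thesis
    using finite_measure_Diff exponential_distributedD_gt[OF d _ assms(4)] assms(2,3) by auto
qed

lemma (in prob_space) AE_exponential_nonneg:
  assumes "distributed M lborel Z (exponential_density l)"
  shows "AE \<omega> in M. 0 \<le> Z \<omega>"
proof -
  have Z: "Z \<in> measurable M lborel" using assms by (simp add: distributed_def)
  have "emeasure M (Z -` {..<0} \<inter> space M)
      = (\<integral>\<^sup>+x. ennreal (exponential_density l x) * indicator {..<0} x \<partial>lborel)"
    using distributed_emeasure[OF assms, of "{..<0}"] by simp
  also have "\<dots> = 0"
  proof -
    have "(\<lambda>x. ennreal (exponential_density l x) * indicator {..<0} x) = (\<lambda>x. 0)"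
      by (simp add: exponential_density_def indicator_def fun_eq_iff)
    then show ?thesis by (simp only:) simp
  qed
  finally have "Z -` {..<0} \<inter> space M \<in> null_sets M" using Z by (auto simp: null_sets_def)
  then show ?thesis by (rule AE_I') auto
qed

lemma (in prob_space) indep_events_INT_null:
  fixes B :: "nat \<Rightarrow> 'a set"
  assumes indep: "indep_events B UNIV" and le: "\<And>k. prob (B k) \<le> c" and "c < 1"
  shows "(\<Inter>k. B k) \<in> null_sets M"
proof -
  have B: "B k \<in> events" for k using indep unfolding indep_events_def by auto
  have "0 \<le> c" using le[of 0] measure_nonneg[of M "B 0"] by linarith
  have bound: "prob (\<Inter>k. B k) \<le> c ^ Suc n" for n
  proof -
    have "prob (\<Inter>k. B k) \<le> prob (\<Inter>k\<in>{..n}. B k)" using B by (intro finite_measure_mono) auto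
    also have "\<dots> = (\<Prod>k\<in>{..n}. prob (B k))" using indep unfolding indep_events_def by auto
    also have "\<dots> \<le> (\<Prod>k\<in>{..n}. c)" using le by (intro prod_mono) auto
    finally show ?thesis by simp
  qed
  have "(\<lambda>n. c ^ Suc n) \<longlonglongrightarrow> 0"
    using \<open>0 \<le> c\<close> \<open>c < 1\<close> by (intro LIMSEQ_Suc LIMSEQ_power_zero) auto
  then have "prob (\<Inter>k. B k) \<le> 0" using bound by (intro LIMSEQ_le_const) auto
  moreover have "(\<Inter>k. B k) \<in> events" using B by auto
  ultimately show ?thesis by (simp add: null_sets_def emeasure_eq_measure measure_le_0_iff)
qed

text \<open>For p + 2\<delta> < q, the first two onsets of x lie in (p, q) and precede its first recovery.\<close>

definition early_double_onset ::
  "('v clock \<Rightarrow> 'a \<Rightarrow> real) \<Rightarrow> 'v \<Rightarrow> real \<Rightarrow> real \<Rightarrow> real \<Rightarrow> 'a \<Rightarrow> bool" where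
  "early_double_onset X x p \<delta> q \<omega> \<longleftrightarrow>
     p < X (OnsC x 0) \<omega> \<and> X (OnsC x 0) \<omega> \<le> p + \<delta> \<and> 0 < X (OnsC x (Suc 0)) \<omega> \<and>
     X (OnsC x (Suc 0)) \<omega> \<le> \<delta> \<and> q < X (RecC x 0) \<omega>"

lemma early_double_onset_not_onset_ordered:
  assumes "early_double_onset X x p \<delta> q \<omega>" and "p + 2 * \<delta> < q"
    and nonneg: "\<And>j. 0 \<le> X (RecC x j) \<omega>" and "{Vtx x} \<times> {p<..<q} \<subseteq> R"
  shows "\<not> onset_ordered (rec_lab X \<omega>) (ons_lab X \<omega>) R"
proof
  assume ordered: "onset_ordered (rec_lab X \<omega>) (ons_lab X \<omega>) R"
  define t0 where "t0 = X (OnsC x 0) \<omega>"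
  define t1 where "t1 = X (OnsC x 0) \<omega> + X (OnsC x (Suc 0)) \<omega>"
  have "t0 \<in> ons_lab X \<omega> x" "t1 \<in> ons_lab X \<omega> x"
    unfolding ons_lab_def arrivals_def t0_def t1_def
    by (rule range_eqI[of _ _ 0], simp) (rule range_eqI[of _ _ "Suc 0"], simp)
  moreover have "p < t0" "t0 < t1" "t1 < q"
    using assms(1,2) unfolding early_double_onset_def t0_def t1_def by auto
  moreover have "(Vtx x, t0) \<in> R" "(Vtx x, t1) \<in> R" "{Vtx x} \<times> {t0<..<q} \<subseteq> R"
    using assms(4) calculation by auto
  ultimately obtain s where "s < t1" "s \<in> rec_lab X \<omega> x"
    using ordered[unfolded onset_ordered_def, rule_format, of t0 x q t1 x] by auto
  then obtain n where "s = (\<Sum>k\<le>n. X (RecC x k) \<omega>)" unfolding rec_lab_def arrivals_def by auto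
  moreover have "X (RecC x 0) \<omega> \<le> (\<Sum>k\<le>n. X (RecC x k) \<omega>)"
    using nonneg by (intro member_le_sum) auto
  ultimately show False
    using \<open>s < t1\<close> \<open>t1 < q\<close> assms(1) unfolding early_double_onset_def by auto
qed

lemma (in prob_space) prob_early_double_onset:
  fixes X :: "'v clock \<Rightarrow> 'a \<Rightarrow> real"
  assumes indep: "indep_vars (\<lambda>_. borel) X I"
    and clocks: "{OnsC x 0, OnsC x (Suc 0), RecC x 0} \<subseteq> I"
    and ons: "\<And>j. distributed M lborel (X (OnsC x j)) (exponential_density 1)"
    and rec: "distributed M lborel (X (RecC x 0)) (exponential_density tau)"
    and "0 < tau" "0 \<le> p" "0 < \<delta>" "0 \<le> q"
  shows "prob {\<omega> \<in> space M. early_double_onset X x p \<delta> q \<omega>}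
           = (exp (- p) - exp (- (p + \<delta>))) * (1 - exp (- \<delta>)) * exp (- q * tau)"
proof -
  define A where "A i = (if i = OnsC x 0 then {p<..p + \<delta>} else if i = OnsC x (Suc 0) then {0<..\<delta>}
    else {q<..})" for i
  have "{\<omega> \<in> space M. early_double_onset X x p \<delta> q \<omega>}
      = (\<Inter>i\<in>{OnsC x 0, OnsC x (Suc 0), RecC x 0}. X i -` A i \<inter> space M)"
    unfolding early_double_onset_def A_def by auto
  also have "prob \<dots> = (\<Prod>i\<in>{OnsC x 0, OnsC x (Suc 0), RecC x 0}. prob (X i -` A i \<inter> space M))"
    using clocks by (intro indep_varsD[OF indep]) (auto simp: A_def)
  also have "\<dots> = (exp (- p) - exp (- (p + \<delta>))) * ((1 - exp (- \<delta>)) * exp (- q * tau))"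
    using exponential_distributed_interval[OF ons, of p "p + \<delta>"]
      exponential_distributed_interval[OF ons, of 0 \<delta>]
      exponential_distributedD_gt[OF rec \<open>0 \<le> q\<close> \<open>0 < tau\<close>] assms(6-8)
    by (simp add: A_def vimage_def Int_def conj_commute)
  finally show ?thesis by (simp add: mult.assoc)
qed

text \<open>The events for distinct vertices depend on disjoint sets of clocks, hence are independent,
  and all have the same positive probability.\<close>

lemma (in prob_space) AE_some_early_double_onset:
  fixes X :: "'v clock \<Rightarrow> 'a \<Rightarrow> real" and xs :: "nat \<Rightarrow> 'v"
  assumes indep: "indep_vars (\<lambda>_. borel) X I" and "inj xs"
    and clocks: "\<And>k. {OnsC (xs k) 0, OnsC (xs k) (Suc 0), RecC (xs k) 0} \<subseteq> I"
    and ons: "\<And>k j. distributed M lborel (X (OnsC (xs k) j)) (exponential_density 1)"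
    and rec: "\<And>k. distributed M lborel (X (RecC (xs k) 0)) (exponential_density tau)"
    and "0 < tau" "0 \<le> p" "0 < \<delta>" "0 \<le> q"
  shows "AE \<omega> in M. \<exists>k. early_double_onset X (xs k) p \<delta> q \<omega>"
proof -
  define K where "K k = {OnsC (xs k) 0, OnsC (xs k) (Suc 0), RecC (xs k) 0}" for k
  define \<pi> where "\<pi> = (exp (- p) - exp (- (p + \<delta>))) * (1 - exp (- \<delta>)) * exp (- q * tau)"
  define B where "B k = {\<omega> \<in> space M. \<not> early_double_onset X (xs k) p \<delta> q \<omega>}" for k
  have "0 < \<pi>" unfolding \<pi>_def using assms(8) by (intro mult_pos_pos) auto
  have X: "X i \<in> borel_measurable M" if "i \<in> I" for i
    using indep that unfolding indep_vars_def by auto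
  have E: "{\<omega> \<in> space M. early_double_onset X (xs k) p \<delta> q \<omega>} \<in> events" for k
  proof -
    have "OnsC (xs k) 0 \<in> I" "OnsC (xs k) (Suc 0) \<in> I" "RecC (xs k) 0 \<in> I" using clocks by auto
    from X[OF this(1)] X[OF this(2)] X[OF this(3)] show ?thesis
      unfolding early_double_onset_def by measurable
  qed
  have "prob (B k) = 1 - \<pi>" for k
  proof -
    have "B k = space M - {\<omega> \<in> space M. early_double_onset X (xs k) p \<delta> q \<omega>}"
      unfolding B_def by auto
    then show ?thesis
      using prob_compl[OF E[of k]] prob_early_double_onset[OF indep clocks ons rec assms(6-9)]
      unfolding \<pi>_def by simp
  qed
  moreover have "indep_events B UNIV"
  proof -
    have "disjoint_family_on K UNIV"
      using \<open>inj xs\<close> unfolding disjoint_family_on_def K_def by (auto dest: injD)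
    then have "indep_vars (\<lambda>k. PiM (K k) (\<lambda>_. borel)) (\<lambda>k \<omega>. \<lambda>i\<in>K k. X i \<omega>) UNIV"
      using clocks unfolding K_def by (intro indep_vars_restrict[OF indep]) auto
    then have "indep_events (\<lambda>k. {\<omega> \<in> space M.
        \<not> early_double_onset (\<lambda>i \<omega>'. (\<lambda>i\<in>K k. X i \<omega>') i) (xs k) p \<delta> q \<omega>}) UNIV"
      unfolding early_double_onset_def K_def by (rule indep_eventsI_indep_vars) measurable
    then show ?thesis unfolding B_def K_def early_double_onset_def by simp
  qed
  ultimately have "(\<Inter>k. B k) \<in> null_sets M"
    using \<open>0 < \<pi>\<close> by (intro indep_events_INT_null[of B "1 - \<pi>"]) auto
  then show ?thesis by (rule AE_I') (auto simp: B_def)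
qed

lemma AE_not_onset_ordered:
  fixes R :: "('v loc \<times> real) set"
  assumes "prob_space M" and rep: "graphical_rep M V E lam tau X" and "0 < tau"
    and R: "closure_of_open V E R" and "\<not> countable (vertices_of R)"
  shows "AE \<omega> in M. \<not> onset_ordered (rec_lab X \<omega>) (ons_lab X \<omega>) R"
proof -
  interpret prob_space M by fact
  obtain xs :: "nat \<Rightarrow> 'v" and p q where xs: "inj xs" "range xs \<subseteq> vertices_of R" "0 \<le> p" "p < q"
    "\<And>k. {Vtx (xs k)} \<times> {p<..<q} \<subseteq> R"
    using closure_of_open_uncountable_common_interval[OF R assms(5)] by blast
  define \<delta> where "\<delta> = (q - p) / 3"
  have \<delta>: "0 < \<delta>" "p + 2 * \<delta> < q" using xs(4) unfolding \<delta>_def by (auto simp: field_simps)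
  have xs_V: "xs k \<in> V" for k
    using xs(2) closure_of_open_subset[OF R] unfolding vertices_of_def locs_def by auto
  have indep: "indep_vars (\<lambda>_. borel) X (clock_index V E)"
    and onset_clocks: "\<And>k j. distributed M lborel (X (OnsC (xs k) j)) (exponential_density 1)"
    and recovery_clocks: "\<And>k j. distributed M lborel (X (RecC (xs k) j)) (exponential_density tau)"
    using rep xs_V unfolding graphical_rep_def by auto
  have "{OnsC (xs k) 0, OnsC (xs k) (Suc 0), RecC (xs k) 0} \<subseteq> clock_index V E" for k
    using xs_V unfolding clock_index_def by auto
  from AE_some_early_double_onset[OF indep xs(1) this onset_clocks recovery_clocks \<open>0 < tau\<close> xs(3) \<delta>(1)]
  have "AE \<omega> in M. \<exists>k. early_double_onset X (xs k) p \<delta> q \<omega>" using xs(3,4) by simp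
  moreover have "AE \<omega> in M. \<forall>k j. 0 \<le> X (RecC (xs k) j) \<omega>"
    unfolding AE_all_countable using AE_exponential_nonneg[OF recovery_clocks] by blast
  ultimately show ?thesis
  proof eventually_elim
    case (elim \<omega>)
    then obtain k where "early_double_onset X (xs k) p \<delta> q \<omega>" by blast
    moreover have "\<And>j. 0 \<le> X (RecC (xs k) j) \<omega>" using elim(2) by blast
    ultimately show ?case by (rule early_double_onset_not_onset_ordered[OF _ \<delta>(2) _ xs(5)])
  qed
qed

theorem lemma4:
  fixes M :: "'w measure" and V :: "'v set" and E :: "'v set set"
    and lam tau :: real and X :: "'v clock \<Rightarrow> 'w \<Rightarrow> real"
    and eta :: "'w \<Rightarrow> 'v \<Rightarrow> real \<Rightarrow> nat" and R :: "('v loc \<times> real) set"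
  assumes "prob_space M"
    and "graph V E" and "bounded_degree V E"
    and "lam > 0" and "tau > 0"
    and "graphical_rep M V E lam tau X"
    and "AE \<omega> in M. seis_traj V E (rec_lab X \<omega>) (ons_lab X \<omega>) (tra_lab X \<omega>) (eta \<omega>)"
    and "closure_of_open V E R"
  shows "AE \<omega> in M.
           onset_ordered (rec_lab X \<omega>) (ons_lab X \<omega>) R \<and> good_for (eta \<omega>) R \<longrightarrow>
             (\<forall>t\<ge>0. \<forall>x\<in>V. \<forall>y\<in>V. (Vtx x, t) \<in> R \<and> (Vtx y, t) \<in> R \<and>
                 eta \<omega> x t = 2 \<and> eta \<omega> y t = 2 \<longrightarrow> x = y) \<and>
             (\<forall>xs ts. is_path E xs ts \<and>
                 potentially_active (rec_lab X \<omega>) (ons_lab X \<omega>) (tra_lab X \<omega>) xs ts \<and>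
                 path_set xs ts \<subseteq> R \<and> eta \<omega> (hd xs) (ts ! 0) = 1 \<longrightarrow>
                 active_path (tra_lab X \<omega>) (eta \<omega>) xs ts)"
proof (cases "countable (vertices_of R)")
  case True
  from AE_labels_generic[OF assms(1,6,8) True] assms(7) show ?thesis
  proof eventually_elim
    case (elim \<omega>)
    have "seis_in_region V E (rec_lab X \<omega>) (ons_lab X \<omega>) (tra_lab X \<omega>) (eta \<omega>) R"
      if "onset_ordered (rec_lab X \<omega>) (ons_lab X \<omega>) R \<and> good_for (eta \<omega>) R"
      using that elim assms(2,8) by unfold_locales simp_all
    note unique = seis_in_region.infectious_unique[OF this]
      and active = seis_in_region.potentially_active_path_active[OF this]
    show ?case
    proof (intro impI conjI allI ballI)
      fix t x y assume "onset_ordered (rec_lab X \<omega>) (ons_lab X \<omega>) R \<and> good_for (eta \<omega>) R"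
        "(Vtx x, t) \<in> R \<and> (Vtx y, t) \<in> R \<and> eta \<omega> x t = 2 \<and> eta \<omega> y t = 2"
      then show "x = y" using unique by blast
    next
      fix xs ts assume "onset_ordered (rec_lab X \<omega>) (ons_lab X \<omega>) R \<and> good_for (eta \<omega>) R"
        "is_path E xs ts \<and> potentially_active (rec_lab X \<omega>) (ons_lab X \<omega>) (tra_lab X \<omega>) xs ts \<and>
          path_set xs ts \<subseteq> R \<and> eta \<omega> (hd xs) (ts ! 0) = 1"
      then show "active_path (tra_lab X \<omega>) (eta \<omega>) xs ts" using active by blast
    qed
  qed
next
  case False
  from AE_not_onset_ordered[OF assms(1,6,5,8) False] show ?thesis by eventually_elim simp
qed
end
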